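(* Let $s\in(0,1)$ and $F\in\mathcal M_s$. Suppose that for some $\gamma>0$ one has $\int_\gamma F(x)x^k=0$ for all $k\in\mathbb Z_{\ge0}$. Then $F=0$.
   Context: Fix $q\in(0,1)$. Notation: $(a;q)_\infty=\prod_{j\ge0}(1-aq^j)$, $e_q(x)=1/(x;q)_\infty$. For $\gamma>0$, $\int_\gamma f=(1-q)\sum_{k\in\mathbb Z}\sum_{\epsilon=\pm1}q^k\gamma f(\epsilon q^k\gamma)$ whenever absolutely convergent. For $s>0$, $\mathcal M_s$ is the set of functions $F(x)=f(x)e_{q^2}(-x^2)$ (holomorphic on $|\mathrm{Im}\,x|<1$) where $f(x)=\sum_{l\ge0}a_lx^l$ with $|a_l|\le Cs^lq^{l^2/2}$ for all $l$, for some $C>0$. *)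

theory Defs
  imports "HOL-Analysis.Analysis"
begin

definition qpoch_inf :: "complex \<Rightarrow> real \<Rightarrow> complex" where
  "qpoch_inf a q = (\<Prod>j. 1 - a * of_real (q ^ j))"

definition e_q :: "real \<Rightarrow> complex \<Rightarrow> complex" where
  "e_q q x = 1 / qpoch_inf x q"

text \<open>The q-integral (1-q) sum_{k in Z} sum_{eps = +-1} q^k gamma f(eps q^k gamma)
  converges absolutely (unconditionally) with value I.\<close>
definition qint_has :: "real \<Rightarrow> real \<Rightarrow> (complex \<Rightarrow> complex) \<Rightarrow> complex \<Rightarrow> bool" where
  "qint_has q \<gamma> f I \<longleftrightarrow>
     ((\<lambda>(k::int, \<epsilon>::real). of_real ((1 - q) * q powi k * \<gamma>) * f (of_real (\<epsilon> * q powi k * \<gamma>)))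
        has_sum I) (UNIV \<times> {-1, 1})"

definition M_s :: "real \<Rightarrow> real \<Rightarrow> (complex \<Rightarrow> complex) set" where
  "M_s q s = {F. \<exists>(a::nat \<Rightarrow> complex) (C::real). C > 0 \<and>
      (\<forall>l. norm (a l) \<le> C * s ^ l * q powr (real l ^ 2 / 2)) \<and>
      (\<forall>x. \<bar>Im x\<bar> < 1 \<longrightarrow> F x = (\<Sum>l. a l * x ^ l) * e_q (q^2) (- (x^2)))}"

end

theory Submission
  imports Defs "HOL-Complex_Analysis.Complex_Analysis"
begin

text \<open>
  On the real line \<open>F = f w\<close> with the even weight \<open>w(y) = e_{q^2}(-y^2)\<close>, which satisfies
  \<open>w(q y) = (1 + y^2) w(y)\<close>. Hence the moments \<open>\<mu>(m) = \<Sum>_k x_k^(m+1) w(x_k)\<close> over the nodes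
  \<open>x_k = q^k \<gamma>\<close> satisfy \<open>\<mu>(m+2) = (q^-(m+1) - 1) \<mu>(m)\<close>, so they grow like \<open>q^-(m^2/4)\<close>:
  slowly enough, against \<open>|a_l| \<le> C s^l q^(l^2/2)\<close>, to expand \<open>F\<close> in the q-integrals and
  exchange the sums, which gives \<open>\<Sum>_l a_l (1 + (-1)^(l+n)) \<mu>(l+n) = 0\<close> for every \<open>n\<close>.
  For \<open>n = 2N + r\<close> the product formula for \<open>\<mu>\<close> turns this into the vanishing at \<open>w = q^-2N\<close>
  of the Newton series \<open>\<Sum>_j c_j \<Prod>_(i<j) (w - t_i)\<close> with \<open>c_j = a_(2j+r) q^-(j^2+2rj) = O(q^(j^2))\<close>
  and \<open>t_i = q^(2i+2r+1)\<close>. These zeros are too many for the growth of the series (maximum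
  modulus principle), so it vanishes identically, and evaluating it at \<open>t_0, t_1, \<dots>\<close> gives
  \<open>c_j = 0\<close> one by one.
\<close>

section \<open>Elementary estimates\<close>

lemma exp_neg_div_le_one_minus:
  fixes x q :: real
  assumes "0 \<le> x" "x \<le> q" "q < 1"
  shows "exp (- x / (1 - q)) \<le> 1 - x"
proof -
  define t where "t = x / (1 - x)"
  have x1: "x < 1" using assms by simp
  have t0: "0 \<le> t" unfolding t_def using assms x1 by simp
  have "exp (- x / (1 - q)) \<le> exp (- t)"
    unfolding t_def using assms x1 by (simp add: frac_le)
  also have "exp (- t) = inverse (exp t)" by (simp add: exp_minus)
  also have "\<dots> \<le> inverse (1 + t)"
    using t0 by (intro le_imp_inverse_le exp_ge_add_one_self) auto
  also have "inverse (1 + t) = 1 - x" using x1 by (simp add: t_def field_simps)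
  finally show ?thesis .
qed

lemma prod_one_minus_ge_exp_sum:
  fixes x :: "'a \<Rightarrow> real"
  assumes "\<And>i. i \<in> A \<Longrightarrow> 0 \<le> x i" "\<And>i. i \<in> A \<Longrightarrow> x i \<le> q" "q < 1"
  shows "exp (- (\<Sum>i\<in>A. x i) / (1 - q)) \<le> (\<Prod>i\<in>A. 1 - x i)"
proof (cases "finite A")
  case True
  have "- (\<Sum>i\<in>A. x i) / (1 - q) = (\<Sum>i\<in>A. - x i / (1 - q))"
    by (simp add: sum_negf sum_divide_distrib)
  hence "exp (- (\<Sum>i\<in>A. x i) / (1 - q)) = (\<Prod>i\<in>A. exp (- x i / (1 - q)))"
    using True by (simp add: exp_sum)
  also have "\<dots> \<le> (\<Prod>i\<in>A. 1 - x i)"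
    using assms exp_neg_div_le_one_minus[of "x _" q] by (intro prod_mono) simp
  finally show ?thesis .
qed simp

lemma sum_power_lessThan_le:
  fixes q :: real
  assumes "0 \<le> q" "q < 1"
  shows "(\<Sum>i<n. q ^ i) \<le> 1 / (1 - q)"
  using assms by (simp add: sum_gp_strict divide_right_mono)

lemma summable_power_square_mult_power:
  fixes q R :: real
  assumes "0 < q" "q < 1" "0 \<le> R"
  shows "summable (\<lambda>j. q ^ (j * j) * R ^ j)"
proof (rule summable_comparison_test_ev)
  have "(\<lambda>j. q ^ j * R) \<longlonglongrightarrow> 0 * R"
    by (intro tendsto_intros) (use assms in auto)
  hence "eventually (\<lambda>j. q ^ j * R < 1/2) sequentially"
    by (intro order_tendstoD) auto
  thus "eventually (\<lambda>j. norm (q ^ (j * j) * R ^ j) \<le> (1/2) ^ j) sequentially"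
  proof eventually_elim
    case (elim j)
    have "norm (q ^ (j * j) * R ^ j) = (q ^ j * R) ^ j"
      using assms by (simp add: power_mult power_mult_distrib abs_mult)
    also have "\<dots> \<le> (1/2) ^ j" using elim assms by (intro power_mono) auto
    finally show ?case .
  qed
qed simp

lemma sum_even_lessThan: "(\<Sum>i<n. 2 * i) = n * (n - 1 :: nat)"
  by (induction n) (auto simp: algebra_simps)

lemma sum_odd_shifted_lessThan: "(\<Sum>i<n. 2 * i + 2 * r + 1) = n * n + 2 * r * (n::nat)"
  by (induction n) (auto simp: algebra_simps)

text \<open>The terms of the theta series at radius \<open>(1/q)^(2m+1)\<close> peak at \<open>j = m, m + 1\<close> and
  decay geometrically on both sides, because
  \<open>j\<^sup>2 + (m + 1) m = (2m + 1) j + e (e + 1)\<close> with \<open>e\<close> the distance of \<open>j\<close> to that peak.\<close>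
lemma theta_sum_le:
  fixes q :: real
  assumes q: "0 < q" "q < 1"
  shows "(\<Sum>j. q ^ (j*j) * ((1/q) ^ (2*m+1)) ^ j) \<le> 2 / (1 - q) * (1/q) ^ (Suc m * m)"
proof -
  define Q where "Q = 1/q"
  define r where "r = Q ^ (2*m+1)"
  define X where "X = Q ^ (Suc m * m)"
  have X0: "0 < X" using q by (simp add: X_def Q_def)
  have peak: "q ^ (j*j) * r ^ j = X * q ^ (e*(e+1))"
    if eq: "j*j + Suc m * m = (2*m+1)*j + e*(e+1)" for j e
  proof -
    have "q ^ (j*j) * r ^ j = q ^ (j*j) * Q ^ ((2*m+1)*j)" unfolding r_def power_mult ..
    also have "\<dots> = q ^ (j*j) * Q ^ ((2*m+1)*j) * (X * q ^ (Suc m * m))"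
      using q by (simp add: X_def Q_def power_one_over)
    also have "\<dots> = X * (q ^ (j*j + Suc m * m) * Q ^ ((2*m+1)*j))"
      by (simp add: power_add mult_ac)
    also have "\<dots> = X * q ^ (e*(e+1)) * (Q ^ ((2*m+1)*j) * q ^ ((2*m+1)*j))"
      unfolding eq by (simp add: power_add mult_ac)
    finally show ?thesis using q by (simp add: Q_def power_one_over)
  qed
  define h where "h j = (if Suc m \<le> j then q ^ (j - Suc m) else q ^ (m - j))" for j
  have term_le: "q ^ (j*j) * r ^ j \<le> X * h j" for j
  proof -
    obtain e where "j*j + Suc m * m = (2*m+1)*j + e*(e+1)" and "h j = q ^ e"
    proof (cases "Suc m \<le> j")
      case True
      then obtain e where "j = Suc m + e" using le_Suc_ex by blast
      thus ?thesis using that[of e] by (simp add: h_def algebra_simps)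
    next
      case False
      then obtain e where "m = j + e" using le_Suc_ex by (metis not_less_eq_eq nat_le_linear)
      thus ?thesis using that[of e] False by (simp add: h_def algebra_simps)
    qed
    moreover have "q ^ (e*(e+1)) \<le> q ^ e" using q by (intro power_decreasing) auto
    ultimately show ?thesis using peak X0 by simp
  qed
  have h_sum_le: "(\<Sum>j<M. h j) \<le> 2 / (1 - q)" for M
  proof -
    have "(\<Sum>j<M. h j) \<le> (\<Sum>j<Suc m + M. h j)"
      using q by (intro sum_mono2) (auto simp: h_def)
    also have "\<dots> = (\<Sum>j<Suc m. q ^ (m - j)) + (\<Sum>j<M. q ^ j)"
      by (induction M) (auto simp: h_def intro!: sum.cong)
    also have "\<dots> = (\<Sum>j<Suc m. q ^ j) + (\<Sum>j<M. q ^ j)"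
      using sum.nat_diff_reindex[of "\<lambda>i. q ^ i" "Suc m"] by simp
    also have "\<dots> \<le> 1 / (1 - q) + 1 / (1 - q)"
      using q by (intro add_mono sum_power_lessThan_le) auto
    finally show ?thesis by simp
  qed
  have "(\<Sum>j. q ^ (j*j) * r ^ j) \<le> X * (2 / (1 - q))"
  proof (rule suminf_le_const)
    show "summable (\<lambda>j. q ^ (j*j) * r ^ j)"
      using q by (intro summable_power_square_mult_power) (auto simp: r_def Q_def)
    fix M
    have "(\<Sum>j<M. q ^ (j*j) * r ^ j) \<le> X * (\<Sum>j<M. h j)"
      unfolding sum_distrib_left by (intro sum_mono term_le)
    also have "\<dots> \<le> X * (2 / (1 - q))" using h_sum_le X0 by (intro mult_left_mono) auto
    finally show "(\<Sum>j<M. q ^ (j*j) * r ^ j) \<le> X * (2 / (1 - q))" .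
  qed
  thus ?thesis by (simp only: Q_def r_def X_def mult.commute)
qed

lemma prod_radius_minus_geometric_ge:
  fixes q :: real
  assumes q: "0 < q" "q < 1"
  shows "((1/q) ^ (Suc m * m))\<^sup>2 * (1/q) ^ Suc m * exp (- 1 / (1 - q)\<^sup>2)
    \<le> (\<Prod>N<Suc m. (1/q) ^ (2*m+1) - (1/q) ^ (2*N))"
proof -
  define Q where "Q = 1/q"
  define d where "d N = 2*m+1 - 2*N" for N
  have gap: "Q ^ (2*m+1) - Q ^ (2*N) = Q ^ (2*m+1) * (1 - q ^ d N)" if "N < Suc m" for N
  proof -
    have "Q ^ (2*m+1) = Q ^ (2*N) * Q ^ d N" using that by (simp add: d_def flip: power_add)
    hence "Q ^ (2*m+1) * q ^ d N = Q ^ (2*N) * (Q ^ d N * q ^ d N)" by (simp add: mult_ac)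
    also have "Q ^ d N * q ^ d N = 1" using q by (simp add: Q_def power_one_over)
    finally show ?thesis by (simp add: algebra_simps)
  qed
  have "(\<Prod>N<Suc m. Q ^ (2*m+1) - Q ^ (2*N)) = (\<Prod>N<Suc m. Q ^ (2*m+1) * (1 - q ^ d N))"
    by (intro prod.cong refl gap) simp
  also have "\<dots> = (Q ^ (2*m+1)) ^ Suc m * (\<Prod>N<Suc m. 1 - q ^ d N)"
    by (simp only: prod.distrib prod_constant card_lessThan)
  also have "(Q ^ (2*m+1)) ^ Suc m = (Q ^ (Suc m * m))\<^sup>2 * Q ^ Suc m"
    by (simp flip: power_mult power_add add: algebra_simps)
  finally have prod_eq: "(\<Prod>N<Suc m. Q ^ (2*m+1) - Q ^ (2*N))
      = (Q ^ (Suc m * m))\<^sup>2 * Q ^ Suc m * (\<Prod>N<Suc m. 1 - q ^ d N)" .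
  have "(\<Sum>N<Suc m. q ^ d N) \<le> (\<Sum>N<Suc m. q ^ (Suc m - Suc N))"
    using q by (intro sum_mono power_decreasing) (auto simp: d_def)
  also have "\<dots> = (\<Sum>i<Suc m. q ^ i)" by (rule sum.nat_diff_reindex)
  also have "\<dots> \<le> 1 / (1 - q)" using q by (intro sum_power_lessThan_le) auto
  finally have "(\<Sum>N<Suc m. q ^ d N) / (1 - q) \<le> 1 / (1 - q) / (1 - q)"
    using q by (intro divide_right_mono) auto
  hence "- 1 / (1 - q)\<^sup>2 \<le> - (\<Sum>N<Suc m. q ^ d N) / (1 - q)"
    by (simp add: power2_eq_square del: sum.lessThan_Suc)
  hence "exp (- 1 / (1 - q)\<^sup>2) \<le> exp (- (\<Sum>N<Suc m. q ^ d N) / (1 - q))" by simp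
  also have "\<dots> \<le> (\<Prod>N<Suc m. 1 - q ^ d N)"
    using q by (intro prod_one_minus_ge_exp_sum) (auto simp: d_def power_le_one
      intro: power_decreasing[of 1 _ q, simplified])
  finally have "exp (- 1 / (1 - q)\<^sup>2) \<le> (\<Prod>N<Suc m. 1 - q ^ d N)" .
  hence "(Q ^ (Suc m * m))\<^sup>2 * Q ^ Suc m * exp (- 1 / (1 - q)\<^sup>2)
      \<le> (\<Prod>N<Suc m. Q ^ (2*m+1) - Q ^ (2*N))"
    unfolding prod_eq using q by (intro mult_left_mono) (auto simp: Q_def)
  thus ?thesis by (simp only: Q_def)
qed

lemma prod_add_geometric_le:
  fixes q a :: real
  assumes q: "0 < q" "q < 1" and a: "0 \<le> a"
  shows "(\<Prod>N<n. a + (1/q) ^ (2*N)) \<le> (1/q) ^ (n * (n - 1)) * exp (a / (1 - q))"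
proof -
  define Q where "Q = 1/q"
  have Q0: "0 < Q" using q by (simp add: Q_def)
  have "(\<Prod>N<n. a + Q ^ (2*N)) = (\<Prod>N<n. Q ^ (2*N)) * (\<Prod>N<n. 1 + a * q ^ (2*N))"
    using q by (simp add: Q_def power_one_over field_simps flip: prod.distrib)
  also have "(\<Prod>N<n. Q ^ (2*N)) = Q ^ (n * (n - 1))"
    by (simp add: sum_even_lessThan flip: power_sum)
  also have "(\<Prod>N<n. 1 + a * q ^ (2*N)) \<le> exp (\<Sum>N<n. a * q ^ (2*N))"
    using q a by (intro prod_le_exp_sum) auto
  also have "(\<Sum>N<n. a * q ^ (2*N)) \<le> a * (\<Sum>N<n. q ^ N)"
    unfolding sum_distrib_left using q a by (intro sum_mono mult_left_mono power_decreasing) auto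
  also have "\<dots> \<le> a / (1 - q)"
    using mult_left_mono[OF sum_power_lessThan_le[of q n] a] q by simp
  finally show ?thesis using Q0 by (simp add: Q_def mult_left_mono)
qed

section \<open>Newton series vanishing at a geometric sequence\<close>

lemma holomorphic_factor_zeros:
  fixes f :: "complex \<Rightarrow> complex" and v :: "nat \<Rightarrow> complex"
  assumes "f holomorphic_on S" "open S" "inj_on v {..<n}" "\<And>N. N < n \<Longrightarrow> f (v N) = 0"
  shows "\<exists>g. g holomorphic_on S \<and> (\<forall>w. f w = (\<Prod>N<n. w - v N) * g w)"
  using assms(3,4)
proof (induction n)
  case 0
  show ?case using assms(1) by auto
next
  case (Suc n)
  then obtain g where g: "g holomorphic_on S" and fg: "\<And>w. f w = (\<Prod>N<n. w - v N) * g w"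
    by (auto simp: inj_on_def)
  have "v n \<noteq> v N" if "N < n" for N
    using inj_on_eq_iff[OF Suc.prems(1), of n N] that by simp
  hence "(\<Prod>N<n. v n - v N) \<noteq> 0" by simp
  hence gv: "g (v n) = 0" using fg[of "v n"] Suc.prems(2)[of n] by simp
  define g' where "g' w = (if w = v n then deriv g (v n) else (g w - g (v n)) / (w - v n))" for w
  have "g' holomorphic_on S" unfolding g'_def using g assms(2) by (intro pole_lemma_open)
  moreover have "f w = (\<Prod>N<Suc n. w - v N) * g' w" for w
    using fg[of w] gv Suc.prems(2)[of n] by (cases "w = v n") (auto simp: g'_def)
  ultimately show ?case by blast
qed

text \<open>Divide by the zeros inside the disc and apply the maximum modulus principle to the quotient.\<close>
lemma norm_mult_prod_gap_le:
  fixes f :: "complex \<Rightarrow> complex" and v :: "nat \<Rightarrow> complex"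
  assumes hol: "f holomorphic_on UNIV" and inj: "inj_on v {..<n}"
    and zeros: "\<And>N. N < n \<Longrightarrow> f (v N) = 0" and inside: "\<And>N. N < n \<Longrightarrow> norm (v N) < r"
    and z: "norm z \<le> r" and bound: "\<And>w. norm w = r \<Longrightarrow> norm (f w) \<le> M"
  shows "norm (f z) * (\<Prod>N<n. r - norm (v N)) \<le> M * (\<Prod>N<n. norm z + norm (v N))"
proof -
  obtain g where g: "g holomorphic_on UNIV" and fg: "\<And>w. f w = (\<Prod>N<n. w - v N) * g w"
    using holomorphic_factor_zeros[OF hol open_UNIV inj zeros] by blast
  define P where "P = (\<Prod>N<n. r - norm (v N))"
  have P0: "0 < P" unfolding P_def using inside by (intro prod_pos) auto
  have "norm (g z) \<le> M / P"
  proof (rule maximum_modulus_frontier[where f = g and \<xi> = z and S = "cball 0 r"])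
    show "g holomorphic_on interior (cball 0 r)"
      using g holomorphic_on_subset by blast
    show "continuous_on (closure (cball 0 r)) g"
      using g holomorphic_on_imp_continuous_on continuous_on_subset by blast
    fix w :: complex assume "w \<in> frontier (cball 0 r)"
    hence w: "norm w = r" by simp
    have "P \<le> norm (\<Prod>N<n. w - v N)"
      unfolding P_def prod_norm[symmetric]
      using w inside norm_triangle_ineq2[of w "v _"] by (intro prod_mono) (auto intro: less_imp_le)
    hence "P * norm (g w) \<le> norm (f w)"
      by (simp add: fg norm_mult mult_right_mono)
    with bound[OF w] show "norm (g w) \<le> M / P"
      using P0 by (simp add: field_simps)
  qed (use z in auto)
  moreover have "norm (\<Prod>N<n. z - v N) \<le> (\<Prod>N<n. norm z + norm (v N))"
    unfolding prod_norm[symmetric] by (intro prod_mono) (auto intro: norm_triangle_ineq4)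
  ultimately have "norm (f z) \<le> (\<Prod>N<n. norm z + norm (v N)) * (M / P)"
    unfolding fg norm_mult by (intro mult_mono prod_nonneg) auto
  thus ?thesis using P0 by (simp add: P_def field_simps)
qed

definition newton_series :: "(nat \<Rightarrow> complex) \<Rightarrow> (nat \<Rightarrow> complex) \<Rightarrow> complex \<Rightarrow> complex" where
  "newton_series c t w = (\<Sum>j. c j * (\<Prod>i<j. w - t i))"

context
  fixes q C :: real and c t :: "nat \<Rightarrow> complex"
  assumes q: "0 < q" "q < 1"
    and coeff_bound: "\<And>j. norm (c j) \<le> C * q ^ (j*j)"
    and node_bound: "\<And>i. norm (t i) \<le> q ^ i"
begin

lemma norm_newton_term_le:
  assumes R: "1 \<le> R" "norm w \<le> R"
  shows "norm (c j * (\<Prod>i<j. w - t i)) \<le> C * exp (1 / (1 - q)) * (q ^ (j*j) * R ^ j)"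
proof -
  have "norm (\<Prod>i<j. w - t i) \<le> (\<Prod>i<j. R * (1 + q ^ i))"
    unfolding prod_norm[symmetric]
  proof (rule prod_mono)
    fix i
    have "norm (w - t i) \<le> R + q ^ i"
      using norm_triangle_ineq4[of w "t i"] node_bound[of i] R by simp
    also have "\<dots> \<le> R * (1 + q ^ i)"
      using R q mult_right_mono[of 1 R "q ^ i"] by (simp add: algebra_simps)
    finally show "0 \<le> norm (w - t i) \<and> norm (w - t i) \<le> R * (1 + q ^ i)" by simp
  qed
  also have "\<dots> = R ^ j * (\<Prod>i<j. 1 + q ^ i)" by (simp add: prod.distrib)
  also have "\<dots> \<le> R ^ j * exp (1 / (1 - q))"
  proof (rule mult_left_mono)
    have "(\<Prod>i<j. 1 + q ^ i) \<le> exp (\<Sum>i<j. q ^ i)" using q by (intro prod_le_exp_sum) auto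
    also have "\<dots> \<le> exp (1 / (1 - q))" using q sum_power_lessThan_le[of q j] by simp
    finally show "(\<Prod>i<j. 1 + q ^ i) \<le> exp (1 / (1 - q))" .
  qed (use R in auto)
  finally have "norm (c j) * norm (\<Prod>i<j. w - t i) \<le> (C * q ^ (j*j)) * (R ^ j * exp (1 / (1 - q)))"
    using coeff_bound[of j] by (intro mult_mono) (auto intro: order_trans[OF norm_ge_zero])
  thus ?thesis by (simp add: norm_mult algebra_simps)
qed

lemma summable_newton_bound: "0 \<le> R \<Longrightarrow> summable (\<lambda>j. C * exp (1 / (1 - q)) * (q ^ (j*j) * R ^ j))"
  using q by (intro summable_mult summable_power_square_mult_power) auto

lemma norm_newton_series_le:
  assumes "1 \<le> R" "norm w \<le> R"
  shows "norm (newton_series c t w) \<le> C * exp (1 / (1 - q)) * (\<Sum>j. q ^ (j*j) * R ^ j)"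
proof -
  have summ: "summable (\<lambda>j. norm (c j * (\<Prod>i<j. w - t i)))"
    by (rule summable_comparison_test[OF _ summable_newton_bound[of R]])
      (use norm_newton_term_le assms in auto)
  have "norm (newton_series c t w) \<le> (\<Sum>j. norm (c j * (\<Prod>i<j. w - t i)))"
    unfolding newton_series_def by (rule summable_norm[OF summ])
  also have "\<dots> \<le> (\<Sum>j. C * exp (1 / (1 - q)) * (q ^ (j*j) * R ^ j))"
    using assms by (intro suminf_le summ summable_newton_bound norm_newton_term_le) auto
  also have "\<dots> = C * exp (1 / (1 - q)) * (\<Sum>j. q ^ (j*j) * R ^ j)"
    using assms q by (intro suminf_mult summable_power_square_mult_power) auto
  finally show ?thesis .
qed

lemma holomorphic_newton_series: "newton_series c t holomorphic_on UNIV"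
proof (rule holomorphic_uniform_sequence[where f = "\<lambda>n w. \<Sum>j<n. c j * (\<Prod>i<j. w - t i)"])
  fix x :: complex
  have "uniform_limit (cball x 1) (\<lambda>n w. \<Sum>j<n. c j * (\<Prod>i<j. w - t i)) (newton_series c t) sequentially"
    unfolding newton_series_def
  proof (rule Weierstrass_m_test)
    fix j and w :: complex assume "w \<in> cball x 1"
    hence "norm w \<le> norm x + 1" using norm_triangle_sub[of w x] by (auto simp: dist_norm norm_minus_commute)
    thus "norm (c j * (\<Prod>i<j. w - t i)) \<le> C * exp (1 / (1 - q)) * (q ^ (j*j) * (norm x + 1) ^ j)"
      by (intro norm_newton_term_le) auto
  qed (rule summable_newton_bound, simp)
  thus "\<exists>d>0. cball x d \<subseteq> UNIV \<and>
      uniform_limit (cball x d) (\<lambda>n w. \<Sum>j<n. c j * (\<Prod>i<j. w - t i)) (newton_series c t) sequentially"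
    by (intro exI[of _ 1]) auto
qed (auto intro!: holomorphic_intros)

text \<open>A Carlson-type estimate: the zeros \<open>(1/q)^(2N)\<close>, \<open>N \<le> m\<close>, inside the circle of radius
  \<open>(1/q)^(2m+1)\<close> exactly balance the \<open>q^(j*j)\<close>-growth of the series on that circle, up to a
  surplus factor \<open>(1/q)^(m+1)\<close>.\<close>
lemma norm_newton_series_mult_power_le:
  assumes zeros: "\<And>N. newton_series c t (of_real ((1/q) ^ (2*N))) = 0"
    and z: "norm z < (1/q) ^ (2*m+1)"
  shows "norm (newton_series c t z) * (1/q) ^ Suc m
    \<le> C * exp (1 / (1 - q)) * (2 / (1 - q)) * exp (norm z / (1 - q)) / exp (- 1 / (1 - q)\<^sup>2)"
proof -
  define Q where "Q = 1/q"
  define E where "E = exp (1 / (1 - q))"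
  define em where "em = exp (- 1 / (1 - q)\<^sup>2)"
  define v where "v N = complex_of_real (Q ^ (2*N))" for N
  define r where "r = Q ^ (2*m+1)"
  define X where "X = Q ^ (Suc m * m)"
  define S where "S = (\<Sum>j. q ^ (j*j) * r ^ j)"
  define Z where "Z = (\<Prod>N<Suc m. norm z + Q ^ (2*N))"
  have Q1: "1 < Q" using q by (simp add: Q_def)
  have C0: "0 \<le> C" using order_trans[OF norm_ge_zero coeff_bound[of 0]] by simp
  have em0: "0 < em" by (simp add: em_def)
  have norm_v: "norm (v N) = Q ^ (2*N)" for N using Q1 by (simp add: v_def norm_power)
  have r1: "1 \<le> r" unfolding r_def using Q1 by (intro one_le_power) auto
  have X0: "0 < X" using Q1 by (simp add: X_def)
  have S0: "0 \<le> S" unfolding S_def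
    using q r1 by (intro suminf_nonneg summable_power_square_mult_power) auto
  have "inj_on v {..<Suc m}"
  proof (rule inj_onI)
    fix N M assume "v N = v M"
    hence "Q ^ (2*N) = Q ^ (2*M)" by (metis norm_v)
    thus "N = M" using power_inject_exp[OF Q1] by simp
  qed
  moreover have "newton_series c t (v N) = 0" for N
    unfolding v_def Q_def by (rule zeros)
  moreover have "norm (v N) < r" if "N < Suc m" for N
    unfolding norm_v r_def using Q1 that by (intro power_strict_increasing) auto
  moreover have "norm (newton_series c t w) \<le> C * E * S" if "norm w = r" for w
    unfolding E_def S_def using r1 that by (intro norm_newton_series_le) auto
  ultimately have "norm (newton_series c t z) * (\<Prod>N<Suc m. r - norm (v N))
      \<le> C * E * S * (\<Prod>N<Suc m. norm z + norm (v N))"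
    using z by (intro norm_mult_prod_gap_le[OF holomorphic_newton_series]) (auto simp: r_def Q_def)
  hence main: "norm (newton_series c t z) * (\<Prod>N<Suc m. r - Q ^ (2*N)) \<le> C * E * S * Z"
    by (simp only: norm_v Z_def)
  have "X\<^sup>2 * (norm (newton_series c t z) * Q ^ Suc m * em)
      = norm (newton_series c t z) * (X\<^sup>2 * Q ^ Suc m * em)"
    by (simp add: algebra_simps)
  also have "\<dots> \<le> norm (newton_series c t z) * (\<Prod>N<Suc m. r - Q ^ (2*N))"
    using prod_radius_minus_geometric_ge[OF q, of m]
    by (intro mult_left_mono) (simp_all add: X_def r_def Q_def em_def)
  also have "\<dots> \<le> C * E * S * Z" by (rule main)
  also have "\<dots> \<le> C * E * (2 / (1 - q) * X) * (X * exp (norm z / (1 - q)))"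
  proof (intro mult_mono mult_left_mono)
    show "S \<le> 2 / (1 - q) * X"
      using theta_sum_le[OF q, of m] by (simp only: S_def r_def X_def Q_def)
    show "Z \<le> X * exp (norm z / (1 - q))"
      using prod_add_geometric_le[OF q, of "norm z" "Suc m"] by (simp add: Z_def X_def Q_def)
    show "0 \<le> Z" unfolding Z_def using Q1 by (intro prod_nonneg) auto
  qed (use C0 S0 X0 q in \<open>auto simp: E_def\<close>)
  also have "\<dots> = X\<^sup>2 * (C * E * (2 / (1 - q)) * exp (norm z / (1 - q)))"
    by (simp add: power2_eq_square)
  finally have "X\<^sup>2 * (norm (newton_series c t z) * Q ^ Suc m * em)
      \<le> X\<^sup>2 * (C * E * (2 / (1 - q)) * exp (norm z / (1 - q)))" .
  moreover have "0 < X\<^sup>2" using X0 by simp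
  ultimately have "norm (newton_series c t z) * Q ^ Suc m * em
      \<le> C * E * (2 / (1 - q)) * exp (norm z / (1 - q))"
    by (rule mult_left_le_imp_le)
  hence "norm (newton_series c t z) * Q ^ Suc m
      \<le> C * E * (2 / (1 - q)) * exp (norm z / (1 - q)) / em"
    by (rule pos_le_divide_eq[OF em0, THEN iffD2])
  thus ?thesis by (simp only: Q_def E_def em_def)
qed

lemma newton_series_eq_0:
  assumes zeros: "\<And>N. newton_series c t (of_real ((1/q) ^ (2*N))) = 0"
  shows "newton_series c t z = 0"
proof -
  define D where
    "D = C * exp (1 / (1 - q)) * (2 / (1 - q)) * exp (norm z / (1 - q)) / exp (- 1 / (1 - q)\<^sup>2)"
  have "1 < 1/q" using q by simp
  then obtain m0 where m0: "norm z < (1/q) ^ m0" using real_arch_pow by blast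
  have "norm (newton_series c t z) \<le> D * q ^ Suc m" if "m \<ge> m0" for m
  proof -
    have "(1/q) ^ m0 \<le> (1/q) ^ (2*m+1)" using q that by (intro power_increasing) auto
    hence "norm (newton_series c t z) * (1/q) ^ Suc m \<le> D"
      unfolding D_def using m0 by (intro norm_newton_series_mult_power_le zeros) auto
    thus ?thesis using q by (simp add: power_one_over field_simps)
  qed
  moreover have "(\<lambda>m. q ^ m) \<longlonglongrightarrow> 0" using q by (intro LIMSEQ_power_zero) auto
  hence "(\<lambda>m. D * q ^ Suc m) \<longlonglongrightarrow> 0" by (intro tendsto_mult_right_zero LIMSEQ_Suc)
  ultimately have "norm (newton_series c t z) \<le> 0" by (intro Lim_bounded2) auto
  thus ?thesis by simp
qed

lemma newton_coeffs_eq_0: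
  assumes inj: "inj t" and zeros: "\<And>N. newton_series c t (of_real ((1/q) ^ (2*N))) = 0"
  shows "c m = 0"
proof (induction m rule: less_induct)
  case (less m)
  have "(\<lambda>j. c j * (\<Prod>i<j. t m - t i)) sums (\<Sum>j<Suc m. c j * (\<Prod>i<j. t m - t i))"
    by (rule sums_finite) (auto intro!: prod_zero bexI[of _ m])
  moreover have "(\<Sum>j<Suc m. c j * (\<Prod>i<j. t m - t i)) = c m * (\<Prod>i<m. t m - t i)"
    using less by simp
  ultimately have "c m * (\<Prod>i<m. t m - t i) = newton_series c t (t m)"
    by (simp add: newton_series_def sums_iff)
  also have "\<dots> = 0" by (rule newton_series_eq_0[OF zeros])
  finally show ?case using inj by (auto simp: inj_eq)
qed

end

section \<open>The weight and its moments\<close>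

definition qpoch_sq :: "real \<Rightarrow> real \<Rightarrow> real" where
  "qpoch_sq q y = (\<Prod>j. 1 + y\<^sup>2 * q ^ (2*j))"

definition qweight :: "real \<Rightarrow> real \<Rightarrow> real" where
  "qweight q y = 1 / qpoch_sq q y"

context
  fixes q :: real
  assumes q: "0 < q" "q < 1"
begin

lemma has_prod_qpoch_sq: "(\<lambda>j. 1 + y\<^sup>2 * q ^ (2*j)) has_prod qpoch_sq q y"
proof -
  have nonneg: "0 \<le> y\<^sup>2 * q ^ (2*j)" for j using q by simp
  have "summable (\<lambda>j. y\<^sup>2 * (q\<^sup>2) ^ j)"
    using q by (intro summable_mult summable_geometric) (auto simp: power_less_one_iff)
  hence "summable (\<lambda>j. \<bar>y\<^sup>2 * q ^ (2*j)\<bar>)" by (simp add: power_mult)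
  hence "convergent_prod (\<lambda>j. 1 + y\<^sup>2 * q ^ (2*j))"
  proof (rule summable_imp_convergent_prod_real)
    show "y\<^sup>2 * q ^ (2*j) \<noteq> -1" for j using nonneg[of j] by linarith
  qed
  thus ?thesis unfolding qpoch_sq_def by (rule convergent_prod_has_prod)
qed

lemma prod_le_qpoch_sq: "(\<Prod>j<J. 1 + y\<^sup>2 * q ^ (2*j)) \<le> qpoch_sq q y"
  unfolding qpoch_sq_def
  by (rule prod_le_prodinf[OF has_prod_qpoch_sq[of y, unfolded qpoch_sq_def]]) (use q in auto)

lemma one_le_qpoch_sq: "1 \<le> qpoch_sq q y"
  using prod_le_qpoch_sq[where J = 0] by simp

lemma qweight_pos: "0 < qweight q y"
  using one_le_qpoch_sq[of y] by (simp add: qweight_def)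

lemma qweight_le_1: "qweight q y \<le> 1"
  using one_le_qpoch_sq[of y] by (simp add: qweight_def)

lemma qweight_uminus: "qweight q (- y) = qweight q y"
  by (simp add: qweight_def qpoch_sq_def)

lemma qpoch_sq_eq: "qpoch_sq q y = (1 + y\<^sup>2) * qpoch_sq q (q * y)"
proof -
  have "(\<lambda>j. 1 + y\<^sup>2 * q ^ (2 * Suc j)) = (\<lambda>j. 1 + (q * y)\<^sup>2 * q ^ (2*j))"
    by (simp add: power_mult_distrib power2_eq_square mult_ac)
  hence "(\<lambda>j. 1 + y\<^sup>2 * q ^ (2 * Suc j)) has_prod qpoch_sq q (q * y)"
    using has_prod_qpoch_sq[of "q * y"] by simp
  hence "(\<lambda>j. 1 + y\<^sup>2 * q ^ (2*j)) has_prod (qpoch_sq q (q * y) * (1 + y\<^sup>2))"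
    by (subst (asm) has_prod_Suc_iff) (simp_all add: add_nonneg_eq_0_iff)
  thus ?thesis using has_prod_unique2[OF has_prod_qpoch_sq[of y]] by (simp add: mult.commute)
qed

lemma qweight_scale: "qweight q (q * y) = (1 + y\<^sup>2) * qweight q y"
  using qpoch_sq_eq[of y] one_le_qpoch_sq[of "q * y"] by (simp add: qweight_def add_nonneg_eq_0_iff)

lemma power_le_qpoch_sq: "y ^ (2 * n) * q ^ (n * (n - 1)) \<le> qpoch_sq q y"
proof -
  have "(\<Prod>j<n. y\<^sup>2 * q ^ (2*j)) = (y\<^sup>2) ^ n * q ^ (\<Sum>j<n. 2*j)"
    by (simp only: prod.distrib prod_constant card_lessThan power_sum)
  hence "y ^ (2 * n) * q ^ (n * (n - 1)) = (\<Prod>j<n. y\<^sup>2 * q ^ (2*j))"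
    by (simp only: sum_even_lessThan power_mult)
  also have "\<dots> \<le> (\<Prod>j<n. 1 + y\<^sup>2 * q ^ (2*j))"
    using q by (intro prod_mono) auto
  also have "\<dots> \<le> qpoch_sq q y" by (rule prod_le_qpoch_sq)
  finally show ?thesis .
qed

lemma e_q_neg_square_of_real: "e_q (q\<^sup>2) (- (complex_of_real y)\<^sup>2) = of_real (qweight q y)"
proof -
  have "(\<lambda>j. 1 - (- (complex_of_real y)\<^sup>2) * of_real ((q\<^sup>2) ^ j)) has_prod of_real (qpoch_sq q y)"
    using has_prod_of_real_iff[THEN iffD2, OF has_prod_qpoch_sq[of y]] by (simp add: power_mult)
  hence "qpoch_inf (- (complex_of_real y)\<^sup>2) (q\<^sup>2) = of_real (qpoch_sq q y)"
    unfolding qpoch_inf_def by (rule has_prod_unique[symmetric])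
  thus ?thesis by (simp add: e_q_def qweight_def)
qed

end

lemma summable_on_int_geometric_bounds:
  fixes f :: "int \<Rightarrow> real" and A B q :: real
  assumes q: "0 \<le> q" "q < 1" and nonneg: "\<And>k. 0 \<le> f k"
    and pos: "\<And>p. f (int p) \<le> A * q ^ p" and neg: "\<And>p. f (- int (Suc p)) \<le> B * q ^ p"
  shows "f summable_on UNIV"
proof -
  have summable_along: "f summable_on range g" if "inj g" "\<And>p. f (g p) \<le> K * q ^ p" for g K
  proof -
    have "summable (f \<circ> g)"
      using q nonneg that(2) by (intro summable_comparison_test'[OF summable_mult[OF summable_geometric]]) auto
    hence "(f \<circ> g) summable_on UNIV" using nonneg by (intro summable_nonneg_imp_summable_on) auto
    thus ?thesis using summable_on_reindex[of g UNIV f] that(1) by simp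
  qed
  have "f summable_on (range int \<union> range (\<lambda>p. - int (Suc p)))"
    using pos neg by (intro summable_on_Un_disjoint summable_along) (auto simp: inj_def)
  moreover have "range int \<union> range (\<lambda>p. - int (Suc p)) = UNIV"
  proof -
    have "k \<in> range int \<or> k \<in> range (\<lambda>p. - int (Suc p))" for k :: int
    proof (cases "k \<ge> 0")
      case True
      hence "k = int (nat k)" by simp
      thus ?thesis by blast
    next
      case False
      hence "k = - int (Suc (nat (- k - 1)))" by simp
      thus ?thesis by blast
    qed
    thus ?thesis by blast
  qed
  ultimately show ?thesis by simp
qed

definition qnode :: "real \<Rightarrow> real \<Rightarrow> int \<Rightarrow> real" where
  "qnode q \<gamma> k = q powi k * \<gamma>"

text \<open>The exponent \<open>m + 1\<close> includes the Jackson weight \<open>q^k \<gamma>\<close> of the node: up to the factor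
  \<open>1 - q\<close>, this is the q-integral of \<open>x^m qweight q x\<close> over the positive nodes.\<close>
definition qmoment :: "real \<Rightarrow> real \<Rightarrow> nat \<Rightarrow> real" where
  "qmoment q \<gamma> m = (\<Sum>\<^sub>\<infinity>k. qnode q \<gamma> k ^ (m+1) * qweight q (qnode q \<gamma> k))"

context
  fixes q \<gamma> :: real
  assumes q: "0 < q" "q < 1" and \<gamma>: "0 < \<gamma>"
begin

lemma qnode_pos: "0 < qnode q \<gamma> k"
  using q \<gamma> by (simp add: qnode_def)

lemma qnode_add_1: "qnode q \<gamma> (k + 1) = q * qnode q \<gamma> k"
  using q by (simp add: qnode_def power_int_add)

lemma summable_qmoment: "(\<lambda>k. qnode q \<gamma> k ^ (m+1) * qweight q (qnode q \<gamma> k)) summable_on UNIV"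
proof (rule summable_on_int_geometric_bounds[where q = q])
  show "0 \<le> qnode q \<gamma> k ^ (m+1) * qweight q (qnode q \<gamma> k)" for k
    using qnode_pos qweight_pos[OF q] by (simp add: less_imp_le)
  show "qnode q \<gamma> (int p) ^ (m+1) * qweight q (qnode q \<gamma> (int p)) \<le> \<gamma> ^ (m+1) * q ^ p" for p
  proof -
    have "qnode q \<gamma> (int p) ^ (m+1) * qweight q (qnode q \<gamma> (int p)) \<le> qnode q \<gamma> (int p) ^ (m+1)"
      using qnode_pos qweight_le_1[OF q] by (intro mult_left_le) (auto simp: less_imp_le)
    also have "\<dots> = \<gamma> ^ (m+1) * (q ^ p * (q ^ p) ^ m)" by (simp add: qnode_def power_mult_distrib mult_ac)
    also have "\<dots> \<le> \<gamma> ^ (m+1) * q ^ p"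
      using q \<gamma> by (intro mult_left_mono mult_right_le_one_le power_le_one) auto
    finally show ?thesis .
  qed
  define D where "D = q ^ ((m+2) * (m+1))"
  have D0: "0 < D" using q by (simp add: D_def)
  show "qnode q \<gamma> (- int (Suc p)) ^ (m+1) * qweight q (qnode q \<gamma> (- int (Suc p)))
      \<le> 1 / (\<gamma> ^ (m+3) * D) * q ^ p" for p
  proof -
    define y where "y = qnode q \<gamma> (- int (Suc p))"
    have y: "y = \<gamma> / q ^ Suc p"
      by (simp add: y_def qnode_def power_int_minus_divide del: of_nat_Suc)
    have y0: "0 < y" unfolding y_def by (rule qnode_pos)
    have "y ^ (2 * (m+2)) * D \<le> qpoch_sq q y"
      using power_le_qpoch_sq[OF q, of y "m+2"] by (simp add: D_def)
    moreover have "0 < qpoch_sq q y" using one_le_qpoch_sq[OF q, of y] by linarith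
    ultimately have "y ^ (m+1) / qpoch_sq q y \<le> y ^ (m+1) / (y ^ (2 * (m+2)) * D)"
      using y0 D0 by (intro divide_left_mono) auto
    hence "y ^ (m+1) * qweight q y \<le> y ^ (m+1) / (y ^ (2 * (m+2)) * D)"
      by (simp add: qweight_def)
    also have "2 * (m+2) = (m+1) + (m+3)" by simp
    also have "y ^ ((m+1) + (m+3)) = y ^ (m+1) * y ^ (m+3)" by (rule power_add)
    also have "y ^ (m+1) / (y ^ (m+1) * y ^ (m+3) * D) = 1 / (y ^ (m+3) * D)"
      using y0 by simp
    also have "y ^ (m+3) = \<gamma> ^ (m+3) / q ^ (Suc p * (m+3))"
      unfolding y by (simp only: power_divide power_mult)
    also have "1 / (\<gamma> ^ (m+3) / q ^ (Suc p * (m+3)) * D) = q ^ (Suc p * (m+3)) / (\<gamma> ^ (m+3) * D)"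
      using q by simp
    also have "\<dots> \<le> q ^ p / (\<gamma> ^ (m+3) * D)"
      using q \<gamma> D0 by (intro divide_right_mono power_decreasing) (auto simp: trans_le_add2)
    finally show ?thesis by (simp add: y_def)
  qed
qed (use q in auto)

lemma has_sum_qmoment:
  "((\<lambda>k. qnode q \<gamma> k ^ (m+1) * qweight q (qnode q \<gamma> k)) has_sum qmoment q \<gamma> m) UNIV"
  unfolding qmoment_def by (rule has_sum_infsum[OF summable_qmoment])

lemma qmoment_eq: "qmoment q \<gamma> m = q ^ (m+1) * (qmoment q \<gamma> m + qmoment q \<gamma> (m+2))"
proof -
  define g where "g n k = qnode q \<gamma> k ^ (n+1) * qweight q (qnode q \<gamma> k)" for n k
  have shift: "range (\<lambda>k::int. k + 1) = UNIV" by (metis surj_def diff_add_cancel)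
  have "qmoment q \<gamma> m = (\<Sum>\<^sub>\<infinity>k\<in>range (\<lambda>k::int. k + 1). g m k)"
    unfolding shift qmoment_def g_def ..
  also have "\<dots> = (\<Sum>\<^sub>\<infinity>k. g m (k + 1))"
    by (subst infsum_reindex) (auto simp: inj_on_def o_def)
  also have "\<dots> = (\<Sum>\<^sub>\<infinity>k. q ^ (m+1) * (g m k + g (m+2) k))"
    by (simp add: g_def qnode_add_1 qweight_scale[OF q] power_mult_distrib power2_eq_square algebra_simps)
  also have "\<dots> = q ^ (m+1) * (qmoment q \<gamma> m + qmoment q \<gamma> (m+2))"
    using summable_qmoment[of m] summable_qmoment[of "m+2"]
    by (simp add: infsum_cmult_right' infsum_add g_def qmoment_def)
  finally show ?thesis .
qed

lemma qmoment_pos: "0 < qmoment q \<gamma> m"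
proof -
  define f where "f k = qnode q \<gamma> k ^ (m+1) * qweight q (qnode q \<gamma> k)" for k
  have f0: "0 < f k" for k unfolding f_def using qnode_pos qweight_pos[OF q] by simp
  have "f 0 = (\<Sum>\<^sub>\<infinity>k\<in>{0}. f k)" by simp
  also have "\<dots> \<le> (\<Sum>\<^sub>\<infinity>k. f k)"
    using f0 summable_qmoment[of m] by (intro infsum_mono_neutral) (auto simp: f_def less_imp_le)
  finally show ?thesis using f0[of 0] by (simp add: qmoment_def f_def)
qed

lemma qmoment_add_2: "qmoment q \<gamma> (n+2) = qmoment q \<gamma> n * ((1/q) ^ (n+1) - 1)"
  using qmoment_eq[of n] q by (simp add: power_one_over field_simps)

lemma qmoment_add_even: "qmoment q \<gamma> (n + 2*j) = qmoment q \<gamma> n * (\<Prod>i<j. (1/q) ^ (n+1+2*i) - 1)"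
proof (induction j)
  case (Suc j)
  have "qmoment q \<gamma> (n + 2 * Suc j) = qmoment q \<gamma> (n + 2*j) * ((1/q) ^ (n+2*j+1) - 1)"
    using qmoment_add_2[of "n + 2*j"] by simp
  thus ?case using Suc by (simp add: algebra_simps)
qed simp

lemma qmoment_le: "qmoment q \<gamma> m \<le> max (qmoment q \<gamma> 0) (qmoment q \<gamma> 1) * (1/q) powr (real m ^ 2 / 4)"
proof -
  define B where "B = max (qmoment q \<gamma> 0) (qmoment q \<gamma> 1)"
  have "qmoment q \<gamma> m \<le> B * (1/q) powr (real m ^ 2 / 4)"
  proof (induction m rule: nat_induct2)
    case 0
    show ?case using q by (simp add: B_def)
  next
    case 1
    have "qmoment q \<gamma> 1 \<le> B * 1" by (simp add: B_def)
    also have "\<dots> \<le> B * (1/q) powr (1/4)"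
      using q qmoment_pos[of 0] by (intro mult_left_mono ge_one_powr_ge_zero) (auto simp: B_def)
    also have "(1/q) powr (1/4) = (1/q) powr (real 1 ^ 2 / 4)" by simp
    finally show ?case .
  next
    case (step k)
    have "qmoment q \<gamma> (k+2) = qmoment q \<gamma> k * ((1/q) ^ (k+1) - 1)" by (rule qmoment_add_2)
    also have "\<dots> \<le> qmoment q \<gamma> k * (1/q) ^ (k+1)"
      using qmoment_pos[of k] by (intro mult_left_mono) auto
    also have "\<dots> \<le> B * (1/q) powr (real k ^ 2 / 4) * (1/q) ^ (k+1)"
      using step q by (intro mult_right_mono) auto
    also have "\<dots> = B * (1/q) powr (real k ^ 2 / 4 + real (k+1))"
      using q by (simp add: powr_add powr_realpow)
    also have "real k ^ 2 / 4 + real (k+1) = real (k+2) ^ 2 / 4"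
      by (simp add: power2_eq_square field_simps)
    finally show ?case .
  qed
  thus ?thesis by (simp add: B_def)
qed

end

section \<open>Vanishing of the coefficients\<close>

lemma has_sum_Times_sign:
  fixes f :: "'a \<times> real \<Rightarrow> 'b::topological_comm_monoid_add"
  assumes "((\<lambda>k. f (k, 1)) has_sum A) UNIV" "((\<lambda>k. f (k, -1)) has_sum B) UNIV"
  shows "(f has_sum (A + B)) (UNIV \<times> {-1, 1})"
proof -
  have "(f has_sum A) ((\<lambda>k. (k, 1)) ` UNIV)" "(f has_sum B) ((\<lambda>k. (k, -1)) ` UNIV)"
    using assms by (subst has_sum_reindex; force simp: inj_on_def o_def)+
  hence "(f has_sum (A + B)) ((\<lambda>k. (k, 1)) ` UNIV \<union> (\<lambda>k. (k, -1)) ` UNIV)"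
    by (rule has_sum_Un_disjoint) auto
  moreover have "(\<lambda>k. (k, 1::real)) ` UNIV \<union> (\<lambda>k. (k, -1)) ` UNIV = (UNIV :: 'a set) \<times> {-1, 1}"
    by auto
  ultimately show ?thesis by simp
qed

lemma sums_of_has_sum_swap:
  fixes G :: "nat \<Rightarrow> 'b \<Rightarrow> complex"
  assumes abs: "(\<lambda>(l, p). norm (G l p)) summable_on UNIV \<times> I"
    and rows: "\<And>l. (G l has_sum g l) I"
    and cols: "\<And>p. p \<in> I \<Longrightarrow> (\<lambda>l. G l p) sums H p"
    and total: "(H has_sum S) I"
  shows "g sums S"
proof -
  have "(\<lambda>x. norm (case_prod G x)) summable_on UNIV \<times> I"
    using abs by (simp only: case_prod_beta')
  hence "(\<lambda>(l, p). G l p) summable_on UNIV \<times> I"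
    by (rule abs_summable_summable)
  then obtain T where T: "((\<lambda>(l, p). G l p) has_sum T) (UNIV \<times> I)"
    unfolding summable_on_def by blast
  hence T_swap: "((\<lambda>(p, l). G l p) has_sum T) (I \<times> UNIV)"
    using has_sum_swap[THEN iffD1, OF T] by (simp only: prod.case)
  have "((\<lambda>l. G l p) has_sum H p) UNIV" if p: "p \<in> I" for p
  proof -
    have "(\<lambda>l. G l p) summable_on UNIV"
      using summable_on_SigmaD1[OF has_sum_imp_summable[OF T_swap] p] by simp
    hence "((\<lambda>l. G l p) has_sum (\<Sum>\<^sub>\<infinity>l. G l p)) UNIV" by (rule has_sum_infsum)
    moreover from this have "(\<Sum>\<^sub>\<infinity>l. G l p) = H p"
      using has_sum_imp_sums cols[OF p] sums_unique2 by blast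
    ultimately show ?thesis by simp
  qed
  hence "(H has_sum T) I"
    using has_sum_SigmaD[where f = "\<lambda>(p, l). G l p" and B = "\<lambda>_. UNIV"] T_swap by simp
  hence "T = S" using total has_sum_unique by blast
  have "(g has_sum T) UNIV"
    using has_sum_SigmaD[where f = "\<lambda>(l, p). G l p" and B = "\<lambda>_. I"] T rows by simp
  thus ?thesis using \<open>T = S\<close> by (simp add: has_sum_imp_sums)
qed

lemma powr_square_half: "0 < q \<Longrightarrow> q powr (real l ^ 2 / 2) = sqrt q ^ (l * l)"
  by (simp add: powr_half_sqrt[symmetric] powr_realpow[symmetric] powr_powr power2_eq_square)

lemma summable_coeff_series:
  fixes a :: "nat \<Rightarrow> complex" and q s C :: real
  assumes q: "0 < q" "q < 1" and s: "0 \<le> s"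
    and coeff: "\<And>l. norm (a l) \<le> C * s ^ l * q powr (real l ^ 2 / 2)"
  shows "summable (\<lambda>l. a l * z ^ l)"
proof (rule summable_comparison_test)
  have "summable (\<lambda>l. sqrt q ^ (l * l) * (s * norm z) ^ l)"
    using q s by (intro summable_power_square_mult_power) auto
  thus "summable (\<lambda>l. C * (sqrt q ^ (l * l) * (s * norm z) ^ l))" by (rule summable_mult)
  have "norm (a l * z ^ l) \<le> C * (sqrt q ^ (l * l) * (s * norm z) ^ l)" for l
  proof -
    have "norm (a l * z ^ l) = norm (a l) * norm z ^ l" by (simp add: norm_mult norm_power)
    also have "\<dots> \<le> C * s ^ l * sqrt q ^ (l * l) * norm z ^ l"
      using coeff[of l] q by (intro mult_right_mono) (auto simp: powr_square_half)
    also have "\<dots> = C * (sqrt q ^ (l * l) * (s * norm z) ^ l)"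
      by (simp add: power_mult_distrib mult_ac)
    finally show ?thesis .
  qed
  thus "\<exists>N. \<forall>l\<ge>N. norm (a l * z ^ l) \<le> C * (sqrt q ^ (l * l) * (s * norm z) ^ l)"
    by blast
qed

lemma qmoment_newton_form:
  assumes q: "0 < q" "q < 1" and \<gamma>: "0 < \<gamma>"
  shows "qmoment q \<gamma> (2*N + 2*r + 2*j) = qmoment q \<gamma> (2*N + 2*r) *
    ((1/q) ^ (j*j + 2*r*j) * (\<Prod>i<j. (1/q) ^ (2*N) - q ^ (2*i + 2*r + 1)))"
proof -
  define Q where "Q = 1/q"
  have "(\<Prod>i<j. Q ^ (2*N + 2*r + 1 + 2*i) - 1)
      = (\<Prod>i<j. Q ^ (2*i + 2*r + 1) * (Q ^ (2*N) - q ^ (2*i + 2*r + 1)))"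
  proof (rule prod.cong)
    fix i
    have "Q ^ (2*i + 2*r + 1) * q ^ (2*i + 2*r + 1) = 1" using q by (simp add: Q_def power_one_over)
    moreover have "Q ^ (2*N + 2*r + 1 + 2*i) = Q ^ (2*i + 2*r + 1) * Q ^ (2*N)"
      by (simp add: algebra_simps flip: power_add)
    ultimately show "Q ^ (2*N + 2*r + 1 + 2*i) - 1 = Q ^ (2*i + 2*r + 1) * (Q ^ (2*N) - q ^ (2*i + 2*r + 1))"
      by (simp add: algebra_simps)
  qed simp
  also have "\<dots> = Q ^ (j*j + 2*r*j) * (\<Prod>i<j. Q ^ (2*N) - q ^ (2*i + 2*r + 1))"
    by (simp only: prod.distrib power_sum[symmetric] sum_odd_shifted_lessThan)
  finally show ?thesis
    using qmoment_add_even[OF q \<gamma>, of "2*N + 2*r" j] by (simp add: Q_def)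
qed

text \<open>\<open>node_term q \<gamma> a n l (k, \<epsilon>)\<close> is the \<open>l\<close>-th term of the power series of \<open>F x * x^n\<close>
  at the node \<open>x = \<epsilon> q^k \<gamma>\<close>, times the Jackson weight \<open>(1 - q) q^k \<gamma>\<close> of the node.\<close>
definition node_term :: "real \<Rightarrow> real \<Rightarrow> (nat \<Rightarrow> complex) \<Rightarrow> nat \<Rightarrow> nat \<Rightarrow> int \<times> real \<Rightarrow> complex"
  where "node_term q \<gamma> a n l p = a l * of_real ((1 - q) * snd p ^ (l+n) *
    (qnode q \<gamma> (fst p) ^ (l+n+1) * qweight q (qnode q \<gamma> (fst p))))"

context
  fixes q s \<gamma> C :: real and a :: "nat \<Rightarrow> complex"
  assumes q: "0 < q" "q < 1" and s: "0 < s" "s < 1" and \<gamma>: "0 < \<gamma>"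
    and coeff: "\<And>l. norm (a l) \<le> C * s ^ l * q powr (real l ^ 2 / 2)"
begin

lemma coeff_nonneg: "0 \<le> C"
  using order_trans[OF norm_ge_zero coeff[of 0]] q by simp

lemma summable_coeff_qmoment: "summable (\<lambda>l. norm (a l) * qmoment q \<gamma> (l + n))"
proof (rule summable_comparison_test'[where N = "2*n"])
  define B where "B = max (qmoment q \<gamma> 0) (qmoment q \<gamma> 1)"
  have B0: "0 \<le> B" using qmoment_pos[OF q \<gamma>, of 0] by (simp add: B_def)
  show "summable (\<lambda>l. C * B * (1/q) powr (real n ^ 2 / 4) * s ^ l)"
    using s by (intro summable_mult summable_geometric) auto
  fix l assume l: "2*n \<le> l"
  have decay: "q powr (real l ^ 2 / 2) * (1/q) powr (real (l+n) ^ 2 / 4) \<le> (1/q) powr (real n ^ 2 / 4)"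
  proof -
    have inv: "(1/q) powr t = q powr (- t)" for t using q by (simp add: powr_divide powr_minus_divide)
    have "0 \<le> real l * (real l - 2 * real n)" using l by (intro mult_nonneg_nonneg) auto
    hence "- (real n ^ 2 / 4) \<le> real l ^ 2 / 2 - real (l+n) ^ 2 / 4"
      by (simp add: power2_eq_square algebra_simps)
    hence "q powr (real l ^ 2 / 2 - real (l+n) ^ 2 / 4) \<le> q powr (- (real n ^ 2 / 4))"
      using q by (intro powr_mono') auto
    thus ?thesis unfolding inv by (simp add: powr_add[symmetric])
  qed
  have "norm (norm (a l) * qmoment q \<gamma> (l+n)) = norm (a l) * qmoment q \<gamma> (l+n)"
    using qmoment_pos[OF q \<gamma>, of "l+n"] by simp
  also have "\<dots> \<le> (C * s ^ l * q powr (real l ^ 2 / 2)) * (B * (1/q) powr (real (l+n) ^ 2 / 4))"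
    using coeff[of l] qmoment_le[OF q \<gamma>, of "l+n"] qmoment_pos[OF q \<gamma>, of "l+n"] coeff_nonneg s
    by (intro mult_mono) (auto simp: B_def)
  also have "\<dots> = C * B * s ^ l * (q powr (real l ^ 2 / 2) * (1/q) powr (real (l+n) ^ 2 / 4))"
    by (simp add: algebra_simps)
  also have "\<dots> \<le> C * B * s ^ l * (1/q) powr (real n ^ 2 / 4)"
    using decay coeff_nonneg B0 s by (intro mult_left_mono) auto
  finally show "norm (norm (a l) * qmoment q \<gamma> (l+n)) \<le> C * B * (1/q) powr (real n ^ 2 / 4) * s ^ l"
    by (simp add: mult_ac)
qed

lemma has_sum_node_term:
  "(node_term q \<gamma> a n l has_sum a l * of_real ((1 - q) * (1 + (-1) ^ (l+n)) * qmoment q \<gamma> (l+n)))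
    (UNIV \<times> {-1, 1})"
proof -
  have "((\<lambda>k. node_term q \<gamma> a n l (k, \<epsilon>)) has_sum
      a l * of_real ((1 - q) * \<epsilon> ^ (l+n) * qmoment q \<gamma> (l+n))) UNIV" for \<epsilon>
    unfolding node_term_def fst_conv snd_conv
    by (intro has_sum_cmult_right has_sum_of_real has_sum_qmoment[OF q \<gamma>])
  from has_sum_Times_sign[OF this this] show ?thesis by (simp add: algebra_simps)
qed

lemma summable_on_norm_node_term:
  "(\<lambda>(l, p). norm (node_term q \<gamma> a n l p)) summable_on UNIV \<times> (UNIV \<times> {-1, 1})"
proof (rule summable_on_SigmaI[where g = "\<lambda>l. norm (a l) * (2 * (1 - q) * qmoment q \<gamma> (l+n))"])
  fix l
  define h where "h k = qnode q \<gamma> k ^ (l+n+1) * qweight q (qnode q \<gamma> k)" for k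
  have "norm (node_term q \<gamma> a n l (k, \<epsilon>)) = norm (a l) * ((1 - q) * h k)" if "\<bar>\<epsilon>\<bar> = 1" for k \<epsilon>
    using q that qnode_pos[OF q \<gamma>] qweight_pos[OF q]
    by (simp add: node_term_def h_def norm_mult abs_mult power_abs abs_of_pos
        del: of_real_mult of_real_diff of_real_power)
  moreover have "((\<lambda>k. norm (a l) * ((1 - q) * h k)) has_sum
      norm (a l) * ((1 - q) * qmoment q \<gamma> (l+n))) UNIV"
    unfolding h_def by (intro has_sum_cmult_right has_sum_qmoment[OF q \<gamma>])
  ultimately have "((\<lambda>p. norm (node_term q \<gamma> a n l p)) has_sum
      norm (a l) * ((1 - q) * qmoment q \<gamma> (l+n)) + norm (a l) * ((1 - q) * qmoment q \<gamma> (l+n)))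
      (UNIV \<times> {-1, 1})"
    by (intro has_sum_Times_sign) simp_all
  thus "((\<lambda>p. case (l, p) of (l, p) \<Rightarrow> norm (node_term q \<gamma> a n l p)) has_sum
      norm (a l) * (2 * (1 - q) * qmoment q \<gamma> (l+n))) (UNIV \<times> {-1, 1})"
    by (simp add: algebra_simps)
next
  have "summable (\<lambda>l. 2 * (1 - q) * (norm (a l) * qmoment q \<gamma> (l+n)))"
    by (intro summable_mult summable_coeff_qmoment)
  thus "(\<lambda>l. norm (a l) * (2 * (1 - q) * qmoment q \<gamma> (l+n))) summable_on UNIV"
    using q qmoment_pos[OF q \<gamma>]
    by (intro summable_nonneg_imp_summable_on) (auto simp: mult_ac less_imp_le)
qed auto

lemma sums_node_term:
  fixes F :: "complex \<Rightarrow> complex"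
  assumes F_real: "\<And>y. F (of_real y) = (\<Sum>l. a l * of_real y ^ l) * of_real (qweight q y)"
    and \<epsilon>: "\<epsilon> = -1 \<or> \<epsilon> = 1"
  shows "(\<lambda>l. node_term q \<gamma> a n l (k, \<epsilon>)) sums (complex_of_real ((1 - q) * q powi k * \<gamma>) *
    (F (of_real (\<epsilon> * q powi k * \<gamma>)) * of_real (\<epsilon> * q powi k * \<gamma>) ^ n))"
proof -
  define x where "x = qnode q \<gamma> k"
  define z where "z = complex_of_real (\<epsilon> * x)"
  define cp where "cp = complex_of_real ((1 - q) * x * qweight q x) * z ^ n"
  have "node_term q \<gamma> a n l (k, \<epsilon>) = cp * (a l * z ^ l)" for l
    by (simp add: node_term_def cp_def z_def x_def power_mult_distrib power_add algebra_simps)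
  moreover have "(\<lambda>l. cp * (a l * z ^ l)) sums (cp * (\<Sum>l. a l * z ^ l))"
    using summable_coeff_series[OF q _ coeff] s by (intro sums_mult summable_sums) auto
  moreover have "qweight q (\<epsilon> * x) = qweight q x" using \<epsilon> by (auto simp: qweight_uminus[OF q])
  hence "F z = (\<Sum>l. a l * z ^ l) * of_real (qweight q x)" unfolding z_def F_real by simp
  hence "cp * (\<Sum>l. a l * z ^ l) = complex_of_real ((1 - q) * q powi k * \<gamma>) *
      (F (of_real (\<epsilon> * q powi k * \<gamma>)) * of_real (\<epsilon> * q powi k * \<gamma>) ^ n)"
    unfolding z_def x_def qnode_def cp_def by (simp add: algebra_simps)
  ultimately show ?thesis by simp
qed

text \<open>Summing \<open>node_term\<close> over the nodes first gives the vanishing q-integral, summing over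
  \<open>\<epsilon> = \<plusminus>1\<close> first gives the parity factor \<open>1 + (-1)^(l+n)\<close>.\<close>
lemma moment_identity:
  fixes F :: "complex \<Rightarrow> complex"
  assumes F_real: "\<And>y. F (of_real y) = (\<Sum>l. a l * of_real y ^ l) * of_real (qweight q y)"
    and vanish: "qint_has q \<gamma> (\<lambda>x. F x * x ^ n) 0"
  shows "(\<lambda>l. a l * of_real ((1 - q) * (1 + (-1) ^ (l+n)) * qmoment q \<gamma> (l+n))) sums 0"
proof (rule sums_of_has_sum_swap[where G = "node_term q \<gamma> a n" and I = "UNIV \<times> {-1, 1}"])
  show "((\<lambda>(k::int, \<epsilon>::real). complex_of_real ((1 - q) * q powi k * \<gamma>) *
      (F (of_real (\<epsilon> * q powi k * \<gamma>)) * of_real (\<epsilon> * q powi k * \<gamma>) ^ n)) has_sum 0) (UNIV \<times> {-1, 1})"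
    using vanish unfolding qint_has_def .
  show "(\<lambda>l. node_term q \<gamma> a n l p) sums (case p of (k, \<epsilon>) \<Rightarrow> complex_of_real ((1 - q) * q powi k * \<gamma>) *
      (F (of_real (\<epsilon> * q powi k * \<gamma>)) * of_real (\<epsilon> * q powi k * \<gamma>) ^ n))"
    if "p \<in> UNIV \<times> {-1, 1}" for p
    using that sums_node_term[OF F_real] by auto
qed (rule summable_on_norm_node_term has_sum_node_term)+

lemma newton_series_moment_zeros:
  assumes moments: "\<And>n. (\<lambda>l. a l * of_real ((1 - q) * (1 + (-1) ^ (l+n)) * qmoment q \<gamma> (l+n))) sums 0"
    and r: "r < 2"
  shows "newton_series (\<lambda>j. a (2*j + r) * of_real ((1/q) ^ (j*j + 2*r*j)))
    (\<lambda>i. of_real (q ^ (2*i + 2*r + 1))) (of_real ((1/q) ^ (2*N))) = 0"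
proof -
  define n where "n = 2*N + r"
  define K where "K = complex_of_real (2 * (1 - q) * qmoment q \<gamma> (2*N + 2*r))"
  define u where "u l = a l * of_real ((1 - q) * (1 + (-1) ^ (l+n)) * qmoment q \<gamma> (l+n))" for l
  have "(\<lambda>j. u (2*j + r)) sums 0"
  proof (subst sums_mono_reindex)
    show "strict_mono (\<lambda>j. 2*j + r)" by (auto simp: strict_mono_def)
    show "u sums 0" unfolding u_def by (rule moments)
    fix l assume "l \<notin> range (\<lambda>j. 2*j + r)"
    hence "l \<noteq> 2 * ((l - r) div 2) + r" by blast
    hence "odd (l + n)" using r unfolding n_def by presburger
    thus "u l = 0" by (simp add: u_def)
  qed
  moreover have "u (2*j + r) = K * (a (2*j + r) * of_real ((1/q) ^ (j*j + 2*r*j)) *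
      (\<Prod>i<j. of_real ((1/q) ^ (2*N)) - of_real (q ^ (2*i + 2*r + 1))))" for j
  proof -
    have "u (2*j + r) = a (2*j + r) * of_real (2 * (1 - q) * qmoment q \<gamma> (2*j + r + n))"
      by (simp add: u_def n_def)
    also have "2*j + r + n = 2*N + 2*r + 2*j" by (simp add: n_def)
    also have "qmoment q \<gamma> (2*N + 2*r + 2*j) = qmoment q \<gamma> (2*N + 2*r) *
        ((1/q) ^ (j*j + 2*r*j) * (\<Prod>i<j. (1/q) ^ (2*N) - q ^ (2*i + 2*r + 1)))"
      by (rule qmoment_newton_form[OF q \<gamma>])
    finally show ?thesis by (simp add: K_def mult_ac)
  qed
  moreover have "K \<noteq> 0" using q qmoment_pos[OF q \<gamma>, of "2*N + 2*r"] by (simp add: K_def)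
  ultimately have "(\<lambda>j. a (2*j + r) * of_real ((1/q) ^ (j*j + 2*r*j)) *
      (\<Prod>i<j. of_real ((1/q) ^ (2*N)) - of_real (q ^ (2*i + 2*r + 1)))) sums 0"
    using sums_mult_D[of K] by fastforce
  thus ?thesis by (simp add: newton_series_def sums_iff)
qed

lemma coeff_subsequence_bound: "norm (a (2*j + r)) * (1/q) ^ (j*j + 2*r*j) \<le> C * q ^ (j*j)"
proof -
  have "norm (a (2*j + r)) \<le> C * s ^ (2*j + r) * q powr (real (2*j + r) ^ 2 / 2)" by (rule coeff)
  also have "\<dots> \<le> C * 1 * q powr (real (2*j + r) ^ 2 / 2)"
    using s coeff_nonneg by (intro mult_right_mono mult_left_mono power_le_one) auto
  also have "q powr (real (2*j + r) ^ 2 / 2) \<le> q powr real (j*j + (j*j + 2*r*j))"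
    using q by (intro powr_mono') (auto simp: power2_eq_square algebra_simps)
  also have "q powr real (j*j + (j*j + 2*r*j)) = q ^ (j*j + (j*j + 2*r*j))"
    by (rule powr_realpow[OF q(1)])
  finally have "norm (a (2*j + r)) \<le> C * q ^ (j*j + (j*j + 2*r*j))"
    using coeff_nonneg by (simp add: mult_left_mono)
  hence "norm (a (2*j + r)) * (1/q) ^ (j*j + 2*r*j)
      \<le> C * q ^ (j*j + (j*j + 2*r*j)) * (1/q) ^ (j*j + 2*r*j)"
    using q by (intro mult_right_mono) auto
  also have "\<dots> = C * q ^ (j*j) * (q ^ (j*j + 2*r*j) * (1/q) ^ (j*j + 2*r*j))"
    by (simp only: power_add mult_ac)
  finally show ?thesis using q by (simp add: power_one_over)
qed

lemma coeff_parity_eq_0: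
  assumes moments: "\<And>n. (\<lambda>l. a l * of_real ((1 - q) * (1 + (-1) ^ (l+n)) * qmoment q \<gamma> (l+n))) sums 0"
    and r: "r < 2"
  shows "a (2*j + r) = 0"
proof -
  define c where "c j = a (2*j + r) * of_real ((1/q) ^ (j*j + 2*r*j))" for j
  define t where "t i = complex_of_real (q ^ (2*i + 2*r + 1))" for i
  have "c j = 0"
  proof (rule newton_coeffs_eq_0[where q = q and C = C and t = t, OF q])
    show "norm (c j) \<le> C * q ^ (j*j)" for j
      using coeff_subsequence_bound q unfolding c_def norm_mult norm_of_real by simp
    show "norm (t i) \<le> q ^ i" for i
    proof -
      have "norm (t i) = q ^ (2*i + 2*r + 1)" unfolding t_def norm_of_real using q by simp
      also have "\<dots> \<le> q ^ i" using q by (intro power_decreasing) auto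
      finally show ?thesis .
    qed
    show "inj t"
    proof (rule injI)
      fix i i' assume "t i = t i'"
      hence "q ^ (2*i + 2*r + 1) = q ^ (2*i' + 2*r + 1)" by (simp only: t_def of_real_eq_iff)
      thus "i = i'" using q by (simp add: power_inject_exp')
    qed
    show "newton_series c t (of_real ((1/q) ^ (2*N))) = 0" for N
      unfolding c_def t_def by (rule newton_series_moment_zeros[OF moments r])
  qed
  thus ?thesis using q by (simp add: c_def)
qed

end

theorem lemma5p10:
  fixes q s \<gamma> :: real and F :: "complex \<Rightarrow> complex"
  assumes "0 < q" "q < 1" "0 < s" "s < 1"
    and "F \<in> M_s q s"
    and "\<gamma> > 0"
    and "\<forall>k::nat. qint_has q \<gamma> (\<lambda>x. F x * x ^ k) 0"
  shows "\<forall>x. \<bar>Im x\<bar> < 1 \<longrightarrow> F x = 0"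
proof -
  obtain a C where coeff: "\<forall>l. norm (a l) \<le> C * s ^ l * q powr (real l ^ 2 / 2)"
    and F: "\<forall>x. \<bar>Im x\<bar> < 1 \<longrightarrow> F x = (\<Sum>l. a l * x ^ l) * e_q (q^2) (- (x^2))"
    using assms(5) unfolding M_s_def by blast
  have F_real: "F (of_real y) = (\<Sum>l. a l * of_real y ^ l) * of_real (qweight q y)" for y
    using F e_q_neg_square_of_real[OF assms(1,2)] by simp
  have coeff': "norm (a l) \<le> C * s ^ l * q powr (real l ^ 2 / 2)" for l using coeff by blast
  have "(\<lambda>l. a l * of_real ((1 - q) * (1 + (-1) ^ (l+n)) * qmoment q \<gamma> (l+n))) sums 0" for n
    using assms(7) by (intro moment_identity[OF assms(1-4,6) coeff' F_real]) auto
  hence "a (2 * (l div 2) + l mod 2) = 0" for l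
    by (intro coeff_parity_eq_0[OF assms(1-4,6) coeff']) auto
  hence "a l = 0" for l by simp
  thus ?thesis using F by simp
qed

end
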